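(* Consider the troll-farm voting model described in the context, and let $x\in(0,\tfrac12)\cup(\tfrac12,1)$. The sender's optimal choice $(\alpha_x,\tilde F_x)$ for voters of type $x$ is unique and is as follows. (i) If $x\in(0,\tfrac12)$: the mass of trolls is $\alpha_x=\dfrac{\kappa_x[s^*(x)]}{\kappa_x[s^*(x)]+1}$ and the density of trolls' messages is $$\tilde f_x(s)=\begin{cases}\dfrac{1-\alpha_x}{\alpha_x}\,\kappa_x'(s) & \text{if } s<s^*(x),\\[1mm] 0 & \text{if } s\ge s^*(x),\end{cases}$$ and under this choice $\pi_x(s)=x$ for all $s\le s^*(x)$. (ii) If $x\in(\tfrac12,1)$: the mass of trolls is $\alpha_x=\dfrac{\kappa_x[s^*(x)]+1}{\kappa_x[s^*(x)]}$ and the density of trolls' messages is $$\tilde f_x(s)=\begin{cases}0 & \text{if } s<s^*(x),\\[1mm] \dfrac{1-\alpha_x}{\alpha_x}\,\kappa_x'(s) & \text{if } s\ge s^*(x),\end{cases}$$ and under this choice $\pi_x(s)=x$ for all $s\ge s^*(x)$.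
   Context: Model. There is an unknown state $\theta\in\{0,1\}$, each state having prior probability $\tfrac12$. There is a continuum of voters of mass one; each voter has a type $x\in\mathbb{R}$, types being distributed according to a cdf $H$ with density $h$ having full support on $\mathbb{R}$. A voter of type $x$ who votes for the government receives payoff $1-x$ if $\theta=1$ and $-x$ if $\theta=0$; voting against gives payoff $0$. In state $\theta$, each voter independently draws an informative signal $s\in\mathbb{R}$ from a cdf $F_\theta$ with density $f_\theta$ having full support on $\mathbb{R}$, where $f_0(0)=f_1(0)$ and the likelihood ratio $m(s)=f_1(s)/f_0(s)$ is strictly increasing in $s$. For $x\in(0,1)$ let $s^*(x)=m^{-1}\!\left(\frac{x}{1-x}\right)$ (the cutoff signal above which a type-$x$ voter votes for the government absent trolls). A sender chooses, for each type $x$, a number $\alpha_x\in[0,1]$ (mass of trolls) and a probability distribution $\tilde F_x$ on $\mathbb{R}$ with density $\tilde f_x$ (trolls' messages, not depending on the state). A voter of type $x$ observes, with probability $1-\alpha_x$, her informative signal drawn from $F_\theta$, and with probability $\alpha_x$ a message drawn from $\tilde F_x$, without knowing which. After observing $s$ her posterior that $\theta=1$ is $$\pi_x(s)=\frac{(1-\alpha_x)f_1(s)+\alpha_x\tilde f_x(s)}{(1-\alpha_x)f_1(s)+\alpha_x\tilde f_x(s)+(1-\alpha_x)f_0(s)+\alpha_x\tilde f_x(s)},$$ and she votes for the government iff $\pi_x(s)\ge x$. Her probability of voting for the government in state $\theta$ is $p_\theta(x)=\int_{\{s:\pi_x(s)\ge x\}}[(1-\alpha_x)f_\theta(s)+\alpha_x\tilde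 f_x(s)]\,ds$, and the government's vote share in state $\theta$ is $V_\theta=\int p_\theta(x)\,dH(x)$. The sender's payoff is $u(V_\theta)$ for a strictly increasing function $u$; she chooses $(\alpha_x,\tilde F_x)_{x\in\mathbb{R}}$ to maximise the expectation $\tfrac12u(V_0)+\tfrac12u(V_1)$, and among choices yielding the same vote shares in both states she strictly prefers $(\alpha_x,\tilde F_x)_x$ over $(\alpha'_x,\tilde F'_x)_x$ whenever $\alpha_x\le\alpha'_x$ for all $x$ with strict inequality for some $x$. Notation: for $x\ne\tfrac12$, $\kappa_x(s):=\dfrac{xF_0(s)-(1-x)F_1(s)}{1-2x}$, and $\kappa_x'$ denotes its derivative in $s$. *)

theory Defs
  imports "HOL-Analysis.Analysis"
begin

text \<open>Troll-farm voting model, restricted to a single voter type x.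
  f0, f1 : densities of the informative signal in states 0 and 1.
  alpha  : mass of trolls for type x;  ft : density of trolls' messages.\<close>

definition cdf_of :: "(real \<Rightarrow> real) \<Rightarrow> real \<Rightarrow> real" where
  "cdf_of f s = (LINT t:{..s}|lborel. f t)"

definition sstar :: "(real \<Rightarrow> real) \<Rightarrow> (real \<Rightarrow> real) \<Rightarrow> real \<Rightarrow> real" where
  "sstar f0 f1 x = (THE s. f1 s / f0 s = x / (1 - x))"

definition kappa :: "(real \<Rightarrow> real) \<Rightarrow> (real \<Rightarrow> real) \<Rightarrow> real \<Rightarrow> real \<Rightarrow> real" where
  "kappa f0 f1 x s = (x * cdf_of f0 s - (1 - x) * cdf_of f1 s) / (1 - 2 * x)"

definition kappa' :: "(real \<Rightarrow> real) \<Rightarrow> (real \<Rightarrow> real) \<Rightarrow> real \<Rightarrow> real \<Rightarrow> real" where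
  "kappa' f0 f1 x s = deriv (kappa f0 f1 x) s"

definition posterior ::
  "(real \<Rightarrow> real) \<Rightarrow> (real \<Rightarrow> real) \<Rightarrow> real \<Rightarrow> (real \<Rightarrow> real) \<Rightarrow> real \<Rightarrow> real" where
  "posterior f0 f1 \<alpha> ft s =
     ((1 - \<alpha>) * f1 s + \<alpha> * ft s) /
     ((1 - \<alpha>) * f1 s + \<alpha> * ft s + (1 - \<alpha>) * f0 s + \<alpha> * ft s)"

text \<open>Probability p_theta(x) that a type-x voter votes for the government in
  state theta, where ftheta is the signal density f_theta of that state.\<close>
definition vote_prob ::
  "(real \<Rightarrow> real) \<Rightarrow> (real \<Rightarrow> real) \<Rightarrow> (real \<Rightarrow> real) \<Rightarrow> real \<Rightarrow> real \<Rightarrow> (real \<Rightarrow> real) \<Rightarrow> real" where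
  "vote_prob f0 f1 ftheta x \<alpha> ft =
     (LINT s:{s. posterior f0 f1 \<alpha> ft s \<ge> x}|lborel. (1 - \<alpha>) * ftheta s + \<alpha> * ft s)"

definition is_density :: "(real \<Rightarrow> real) \<Rightarrow> bool" where
  "is_density g \<longleftrightarrow> g \<in> borel_measurable borel \<and> (\<forall>s. g s \<ge> 0) \<and>
     integrable lborel g \<and> integral\<^sup>L lborel g = 1"

definition admissible :: "real \<Rightarrow> (real \<Rightarrow> real) \<Rightarrow> bool" where
  "admissible \<alpha> ft \<longleftrightarrow> 0 \<le> \<alpha> \<and> \<alpha> \<le> 1 \<and> is_density ft"

definition sender_prefers ::
  "(real \<Rightarrow> real) \<Rightarrow> (real \<Rightarrow> real) \<Rightarrow> real \<Rightarrow> real \<Rightarrow> (real \<Rightarrow> real) \<Rightarrow> real \<Rightarrow> (real \<Rightarrow> real) \<Rightarrow> bool" where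
  "sender_prefers f0 f1 x a' g' a g \<longleftrightarrow>
     (let p0' = vote_prob f0 f1 f0 x a' g'; p1' = vote_prob f0 f1 f1 x a' g';
          p0 = vote_prob f0 f1 f0 x a g; p1 = vote_prob f0 f1 f1 x a g in
      (p0' \<ge> p0 \<and> p1' \<ge> p1 \<and> (p0' > p0 \<or> p1' > p1)) \<or>
      (p0' = p0 \<and> p1' = p1 \<and> a' < a))"

definition optimal_choice ::
  "(real \<Rightarrow> real) \<Rightarrow> (real \<Rightarrow> real) \<Rightarrow> real \<Rightarrow> real \<Rightarrow> (real \<Rightarrow> real) \<Rightarrow> bool" where
  "optimal_choice f0 f1 x \<alpha> ft \<longleftrightarrow> admissible \<alpha> ft \<and>
     \<not> (\<exists>\<alpha>' ft'. admissible \<alpha>' ft' \<and> sender_prefers f0 f1 x \<alpha>' ft' \<alpha> ft)"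

end

theory Submission
  imports Defs
begin

(*
  Let \<kappa>' = (x f0 - (1 - x) f1) / (1 - 2x) and let g be the trolls' density. For \<alpha> < 1 a voter
  of type x votes for the government at s iff (1 - 2x) (1 - \<alpha>) \<kappa>'(s) \<le> (1 - 2x) \<alpha> g(s).
  By the monotone likelihood ratio, \<kappa>' changes sign exactly at s' = s*(x); and \<integral> \<kappa>' = -1.

  For x < 1/2 the sender can make the voter approve in both states, which requires
  \<alpha> g \<ge> (1 - \<alpha>) \<kappa>' almost everywhere. Integrating over s < s' gives (1 - \<alpha>) \<kappa>(s') \<le> \<alpha>,
  i.e. \<alpha> \<ge> \<kappa>/(\<kappa> + 1), and at equality g must be (1 - \<alpha>)/\<alpha> \<kappa>' below s'.

  For x > 1/2 approval happens only above s', where the informative mass is P < 1. With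
  K = \<integral>_{s \<ge> s'} \<kappa>' = -1 - \<kappa>(s') > 0, the vote share is at most (1 - \<alpha>) P + \<alpha>
  (the trolls' mass) and at most (1 - \<alpha>) (P + K) (trolls must keep the posterior at x).
  The smaller bound is maximal exactly at \<alpha> = K/(1 + K) = (\<kappa> + 1)/\<kappa>, and attaining it
  forces g = (1 - \<alpha>)/\<alpha> \<kappa>' above s'.
*)

lemma set_integrable_of_integrable:
  fixes f :: "'a \<Rightarrow> 'b::{banach, second_countable_topology}"
  shows "integrable M f \<Longrightarrow> A \<in> sets M \<Longrightarrow> set_integrable M A f"
  unfolding set_integrable_def using integrable_mult_indicator by blast

lemmas integral_eq_mono_AE_eq_AE_lborel =
  sigma_finite_measure.integral_eq_mono_AE_eq_AE[OF sigma_finite_lborel]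

lemma set_integral_mono_set:
  fixes f :: "'a \<Rightarrow> real"
  assumes "integrable M f" "A \<in> sets M" "B \<in> sets M" "A \<subseteq> B" "\<And>x. x \<in> B \<Longrightarrow> 0 \<le> f x"
  shows "(LINT x:A|M. f x) \<le> (LINT x:B|M. f x)"
  unfolding set_lebesgue_integral_def using assms
  by (intro integral_mono integrable_mult_indicator) (auto split: split_indicator)

lemma cdf_of_has_real_derivative:
  assumes cont: "continuous_on UNIV f" and int: "integrable lborel f"
  shows "(cdf_of f has_real_derivative f t) (at t)"
proof -
  define a where "a = t - 1"
  have set_int: "set_integrable lborel S f" if "S \<in> sets borel" for S
    using set_integrable_of_integrable[OF int] that by simp
  have split: "cdf_of f s = (LINT u:{..<a}|lborel. f u) + integral {a..s} f" if "a < s" for s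
  proof -
    have "cdf_of f s = (LINT u:{..<a} \<union> {a..s}|lborel. f u)"
      unfolding cdf_of_def using that by (simp add: ivl_disj_un)
    also have "\<dots> = (LINT u:{..<a}|lborel. f u) + (LINT u:{a..s}|lborel. f u)"
      by (rule set_integral_Un) (auto intro!: set_int)
    also have "(LINT u:{a..s}|lborel. f u) = integral {a..s} f"
      by (rule set_borel_integral_eq_integral(2)) (auto intro!: set_int)
    finally show ?thesis .
  qed
  have "((\<lambda>s. integral {a..s} f) has_real_derivative f t) (at t within {a..t + 1})"
    by (rule integral_has_real_derivative) (auto intro: continuous_on_subset[OF cont] simp: a_def)
  then have "((\<lambda>s. integral {a..s} f) has_real_derivative f t) (at t)"
    using at_within_interior[of t "{a..t + 1}"] by (simp add: a_def)
  then have "((\<lambda>s. (LINT u:{..<a}|lborel. f u) + integral {a..s} f) has_real_derivative f t) (at t)"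
    using DERIV_add[OF DERIV_const] by fastforce
  then show ?thesis
    by (rule has_field_derivative_transform_within_open[where S="{a<..}"]) (auto simp: split a_def)
qed

lemma interval_not_null_sets_lborel:
  fixes A :: "real set"
  assumes "a < b" "{a<..<b} \<subseteq> A" "A \<in> sets borel"
  shows "A \<notin> null_sets lborel"
proof
  assume "A \<in> null_sets lborel"
  then have "{a<..<b} \<in> null_sets lborel"
    using null_sets_subset[of A lborel "{a<..<b}"] assms(2) by simp
  then show False using assms(1) by (simp add: null_sets_def)
qed

lemma set_integral_pos:
  fixes f :: "'a \<Rightarrow> real"
  assumes int: "integrable M f" and A: "A \<in> sets M" "A \<notin> null_sets M"
    and pos: "AE x\<in>A in M. 0 < f x"
  shows "0 < (LINT x:A|M. f x)"
proof -
  have "set_integrable M A f" using set_integrable_of_integrable[OF int A(1)] .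
  moreover have "AE x\<in>A in M. 0 \<le> f x"
    using pos by eventually_elim auto
  ultimately have "0 \<le> (LINT x:A|M. f x)"
    using set_integral_mono_AE[of M A "\<lambda>_. 0" f] by (simp add: set_integrable_def)
  moreover have "(LINT x:A|M. f x) \<noteq> 0"
    using null_if_pos_func_has_zero_int[OF int A(1) pos] A(2) by blast
  ultimately show ?thesis by simp
qed

lemma set_integral_density_nonneg:
  "is_density g \<Longrightarrow> A \<in> sets borel \<Longrightarrow> 0 \<le> (LINT s:A|lborel. g s)"
  unfolding is_density_def set_lebesgue_integral_def by (auto intro: integral_nonneg_AE)

lemma set_integral_density_le_one:
  assumes "is_density g" "A \<in> sets borel"
  shows "(LINT s:A|lborel. g s) \<le> 1"
proof -
  have "(LINT s:A|lborel. g s) \<le> integral\<^sup>L lborel g"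
    using assms unfolding is_density_def set_lebesgue_integral_def
    by (intro integral_mono integrable_mult_indicator) (auto split: split_indicator)
  then show ?thesis using assms(1) by (simp add: is_density_def)
qed

lemma AE_in_set_if_set_integral_density_eq_one:
  assumes g: "is_density g" "\<And>s. 0 < g s" and A: "A \<in> sets borel"
    and one: "(LINT s:A|lborel. g s) = 1"
  shows "AE s in lborel. s \<in> A"
proof -
  have int: "integrable lborel g" using g(1) by (simp add: is_density_def)
  have "(LINT s:-A|lborel. g s) = (LBINT s. g s - indicator A s * g s)"
    unfolding set_lebesgue_integral_def
    by (intro Bochner_Integration.integral_cong) (auto split: split_indicator)
  also have "\<dots> = integral\<^sup>L lborel g - (LINT s:A|lborel. g s)"
    using A int integrable_mult_indicator[of A lborel g] unfolding set_lebesgue_integral_def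
    by (simp add: Bochner_Integration.integral_diff)
  also have "\<dots> = 0" using g(1) one by (simp add: is_density_def)
  finally have "-A \<in> null_sets lborel"
    using A int g(2) by (intro null_if_pos_func_has_zero_int) auto
  from AE_not_in[OF this] show ?thesis by simp
qed

lemma posterior_ge_iff:
  assumes "0 < f0 s" "0 < f1 s" "0 \<le> \<alpha>" "\<alpha> < 1" "0 \<le> g s"
  shows "x \<le> posterior f0 f1 \<alpha> g s \<longleftrightarrow>
    (1 - \<alpha>) * (x * f0 s - (1 - x) * f1 s) \<le> (1 - 2 * x) * (\<alpha> * g s)"
proof -
  have "0 < (1 - \<alpha>) * f1 s + \<alpha> * g s + (1 - \<alpha>) * f0 s + \<alpha> * g s"
    using assms by (intro add_pos_nonneg add_nonneg_pos mult_pos_pos mult_nonneg_nonneg) auto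
  then show ?thesis
    unfolding posterior_def by (simp add: pos_le_divide_eq algebra_simps)
qed

lemma posterior_eq_iff:
  assumes "0 < f0 s" "0 < f1 s" "0 \<le> \<alpha>" "\<alpha> < 1" "0 \<le> g s"
  shows "posterior f0 f1 \<alpha> g s = x \<longleftrightarrow>
    (1 - \<alpha>) * (x * f0 s - (1 - x) * f1 s) = (1 - 2 * x) * (\<alpha> * g s)"
proof -
  have "0 < (1 - \<alpha>) * f1 s + \<alpha> * g s + (1 - \<alpha>) * f0 s + \<alpha> * g s"
    using assms by (intro add_pos_nonneg add_nonneg_pos mult_pos_pos mult_nonneg_nonneg) auto
  then show ?thesis
    unfolding posterior_def by (simp add: divide_eq_eq algebra_simps) linarith
qed

lemma posterior_all_trolls_le_half: "posterior f0 f1 1 g s \<le> 1 / 2"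
  by (cases "g s = 0") (simp_all add: posterior_def)

lemma optimal_choice_iff_best:
  assumes best: "admissible a g"
    and bound: "\<And>\<alpha> ft f. admissible \<alpha> ft \<Longrightarrow> f \<in> {f0, f1} \<Longrightarrow>
      vote_prob f0 f1 f x \<alpha> ft \<le> vote_prob f0 f1 f x a g"
    and unique: "\<And>\<alpha> ft. admissible \<alpha> ft \<Longrightarrow> \<alpha> \<le> a \<Longrightarrow>
      vote_prob f0 f1 f0 x \<alpha> ft = vote_prob f0 f1 f0 x a g \<Longrightarrow>
      vote_prob f0 f1 f1 x \<alpha> ft = vote_prob f0 f1 f1 x a g \<Longrightarrow>
      \<alpha> = a \<and> (AE s in lborel. ft s = g s)"
    and cong: "\<And>ft f. is_density ft \<Longrightarrow> (AE s in lborel. ft s = g s) \<Longrightarrow> f \<in> {f0, f1} \<Longrightarrow>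
      vote_prob f0 f1 f x a ft = vote_prob f0 f1 f x a g"
  shows "optimal_choice f0 f1 x \<alpha> ft \<longleftrightarrow> is_density ft \<and> \<alpha> = a \<and> (AE s in lborel. ft s = g s)"
proof
  assume "optimal_choice f0 f1 x \<alpha> ft"
  then have adm: "admissible \<alpha> ft" and "\<not> sender_prefers f0 f1 x a g \<alpha> ft"
    using best unfolding optimal_choice_def by blast+
  moreover note bound[OF adm, of f0] bound[OF adm, of f1]
  ultimately have "\<alpha> \<le> a" "vote_prob f0 f1 f0 x \<alpha> ft = vote_prob f0 f1 f0 x a g"
    "vote_prob f0 f1 f1 x \<alpha> ft = vote_prob f0 f1 f1 x a g"
    unfolding sender_prefers_def Let_def by force+
  with adm unique show "is_density ft \<and> \<alpha> = a \<and> (AE s in lborel. ft s = g s)"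
    unfolding admissible_def by blast
next
  assume opt: "is_density ft \<and> \<alpha> = a \<and> (AE s in lborel. ft s = g s)"
  then have adm: "admissible \<alpha> ft" using best unfolding admissible_def by blast
  have "\<not> sender_prefers f0 f1 x \<alpha>' ft' \<alpha> ft" if adm': "admissible \<alpha>' ft'" for \<alpha>' ft'
  proof
    assume "sender_prefers f0 f1 x \<alpha>' ft' \<alpha> ft"
    with opt cong bound[OF adm', of f0] bound[OF adm', of f1]
    have "\<alpha>' < a" "vote_prob f0 f1 f0 x \<alpha>' ft' = vote_prob f0 f1 f0 x a g"
      "vote_prob f0 f1 f1 x \<alpha>' ft' = vote_prob f0 f1 f1 x a g"
      unfolding sender_prefers_def Let_def by force+
    with unique[OF adm'] show False by force
  qed
  with adm show "optimal_choice f0 f1 x \<alpha> ft" unfolding optimal_choice_def by blast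
qed

text \<open>The vote share (1 - \<alpha>) W + \<alpha> Z is bounded by (1 - \<alpha>) P + \<alpha>, increasing in \<alpha>, and by
  (1 - \<alpha>) (P + K), decreasing in \<alpha>; the two bounds cross at \<alpha> = a.\<close>

lemma trade_off_bound:
  fixes P K W Z \<alpha> a :: real
  assumes P: "0 \<le> P" "P < 1" and K: "0 < K" "a * (1 + K) = K"
    and \<alpha>: "0 \<le> \<alpha>" "\<alpha> \<le> 1" and W: "W \<le> P" and Z: "Z \<le> 1" "\<alpha> * Z \<le> (1 - \<alpha>) * K"
  shows "(1 - \<alpha>) * W + \<alpha> * Z \<le> (1 - a) * P + a"
    and "(1 - \<alpha>) * W + \<alpha> * Z = (1 - a) * P + a \<Longrightarrow> \<alpha> = a \<and> Z = 1"
proof -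
  have "a = K / (1 + K)" using K by (simp add: eq_divide_eq)
  then have a: "0 < a" "a < 1" using K by simp_all
  have a_eq: "a = (1 - a) * K" using K(2) by (simp add: algebra_simps)
  have by_mass: "(1 - \<alpha>) * W + \<alpha> * Z \<le> (1 - \<alpha>) * P + \<alpha> * 1"
    using W Z \<alpha> by (intro add_mono mult_left_mono) auto
  have by_persuasion: "(1 - \<alpha>) * W + \<alpha> * Z \<le> (1 - \<alpha>) * (P + K)"
    using mult_left_mono[OF W, of "1 - \<alpha>"] Z \<alpha> by (simp add: distrib_left)
  have lt: "(1 - \<alpha>) * W + \<alpha> * Z < (1 - a) * P + a" if "\<alpha> \<noteq> a"
  proof (cases "\<alpha> < a")
    case True
    then have "0 < (a - \<alpha>) * (1 - P)" using P by simp
    with by_mass show ?thesis by (simp add: algebra_simps)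
  next
    case False
    with that have "(1 - \<alpha>) * (P + K) < (1 - a) * (P + K)"
      using P K by (intro mult_strict_right_mono) auto
    also have "\<dots> = (1 - a) * P + a" using a_eq by (simp add: distrib_left)
    finally show ?thesis using by_persuasion by simp
  qed
  show "(1 - \<alpha>) * W + \<alpha> * Z \<le> (1 - a) * P + a"
    using lt by_mass by (cases "\<alpha> = a") auto
  assume eq: "(1 - \<alpha>) * W + \<alpha> * Z = (1 - a) * P + a"
  with lt have "\<alpha> = a" by force
  moreover have "(1 - a) * W \<le> (1 - a) * P" using W a by simp
  ultimately have "a * 1 \<le> a * Z" using eq by simp
  then show "\<alpha> = a \<and> Z = 1" using \<open>\<alpha> = a\<close> Z(1) a(1) by simp
qed

definition approving_signals ::
  "(real \<Rightarrow> real) \<Rightarrow> (real \<Rightarrow> real) \<Rightarrow> real \<Rightarrow> real \<Rightarrow> (real \<Rightarrow> real) \<Rightarrow> real set" where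
  "approving_signals f0 f1 x \<alpha> g = {s. x \<le> posterior f0 f1 \<alpha> g s}"

locale signal_model =
  fixes f0 f1 :: "real \<Rightarrow> real"
  assumes cont0: "continuous_on UNIV f0" and cont1: "continuous_on UNIV f1"
    and pos0: "\<And>s. 0 < f0 s" and pos1: "\<And>s. 0 < f1 s"
    and int0: "integrable lborel f0" and int1: "integrable lborel f1"
    and tot0: "integral\<^sup>L lborel f0 = 1" and tot1: "integral\<^sup>L lborel f1 = 1"
begin

lemma measurable_f0 [measurable]: "f0 \<in> borel_measurable borel"
  using cont0 by (rule borel_measurable_continuous_onI)

lemma measurable_f1 [measurable]: "f1 \<in> borel_measurable borel"
  using cont1 by (rule borel_measurable_continuous_onI)

lemma is_density_f0: "is_density f0" and is_density_f1: "is_density f1"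
  unfolding is_density_def using pos0 pos1 int0 int1 tot0 tot1 by (auto intro: less_imp_le)

lemma approving_signals_sets:
  assumes "is_density g"
  shows "approving_signals f0 f1 x \<alpha> g \<in> sets borel"
proof -
  have [measurable]: "g \<in> borel_measurable borel" using assms by (simp add: is_density_def)
  have "posterior f0 f1 \<alpha> g \<in> borel_measurable borel"
    unfolding posterior_def[abs_def] by measurable
  then show ?thesis
    unfolding approving_signals_def using borel_measurable_le[of "\<lambda>_. x"] by simp
qed

lemma vote_prob_split:
  fixes x \<alpha> :: real
  assumes f: "is_density f" and g: "is_density g"
  defines "A \<equiv> approving_signals f0 f1 x \<alpha> g"
  shows "vote_prob f0 f1 f x \<alpha> g = (1 - \<alpha>) * (LINT s:A|lborel. f s) + \<alpha> * (LINT s:A|lborel. g s)"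
proof -
  have "A \<in> sets borel" unfolding A_def using g by (rule approving_signals_sets)
  then have "set_integrable lborel A f" "set_integrable lborel A g"
    using f g by (auto intro: set_integrable_of_integrable simp: is_density_def)
  then show ?thesis
    unfolding vote_prob_def A_def approving_signals_def by simp
qed

lemma vote_prob_cong_AE:
  assumes f: "is_density f" and g: "is_density g" "is_density g'"
    and ae: "AE s in lborel. g s = g' s"
  shows "vote_prob f0 f1 f x \<alpha> g = vote_prob f0 f1 f x \<alpha> g'"
proof -
  have [measurable]: "f \<in> borel_measurable borel" "g \<in> borel_measurable borel"
    "g' \<in> borel_measurable borel" using f g by (simp_all add: is_density_def)
  have [measurable]: "approving_signals f0 f1 x \<alpha> g \<in> sets borel"
    "approving_signals f0 f1 x \<alpha> g' \<in> sets borel" using g by (simp_all add: approving_signals_sets)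
  have "AE s in lborel.
      indicator (approving_signals f0 f1 x \<alpha> g) s * ((1 - \<alpha>) * f s + \<alpha> * g s) =
      indicator (approving_signals f0 f1 x \<alpha> g') s * ((1 - \<alpha>) * f s + \<alpha> * g' s)"
    using ae by eventually_elim (simp add: approving_signals_def posterior_def indicator_def)
  then show ?thesis
    unfolding vote_prob_def set_lebesgue_integral_def approving_signals_def[symmetric]
    by (intro integral_cong_AE) simp_all
qed

lemma vote_prob_le_one:
  assumes f: "is_density f" and adm: "admissible \<alpha> g"
  shows "vote_prob f0 f1 f x \<alpha> g \<le> 1"
proof -
  let ?A = "approving_signals f0 f1 x \<alpha> g"
  have g: "is_density g" and \<alpha>: "0 \<le> \<alpha>" "\<alpha> \<le> 1"
    using adm by (auto simp: admissible_def)
  from g have A: "?A \<in> sets borel" by (rule approving_signals_sets)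
  have "(1 - \<alpha>) * (LINT s:?A|lborel. f s) + \<alpha> * (LINT s:?A|lborel. g s) \<le> (1 - \<alpha>) * 1 + \<alpha> * 1"
    using \<alpha> by (intro add_mono mult_left_mono set_integral_density_le_one f g A) auto
  then show ?thesis using vote_prob_split[OF f g] by simp
qed

lemma AE_approving_if_vote_prob_eq_one:
  assumes f: "is_density f" "\<And>s. 0 < f s" and adm: "admissible \<alpha> g" "\<alpha> < 1"
    and one: "vote_prob f0 f1 f x \<alpha> g = 1"
  shows "AE s in lborel. s \<in> approving_signals f0 f1 x \<alpha> g"
proof -
  let ?A = "approving_signals f0 f1 x \<alpha> g"
  have g: "is_density g" and \<alpha>: "0 \<le> \<alpha>" using adm by (auto simp: admissible_def)
  from g have A: "?A \<in> sets borel" by (rule approving_signals_sets)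
  have "\<alpha> * (LINT s:?A|lborel. g s) \<le> \<alpha>"
    using \<alpha> set_integral_density_le_one[OF g A] by (simp add: mult_left_le)
  then have "1 - \<alpha> \<le> (1 - \<alpha>) * (LINT s:?A|lborel. f s)"
    using one vote_prob_split[OF f(1) g] by simp
  then have "(LINT s:?A|lborel. f s) = 1"
    using adm(2) set_integral_density_le_one[OF f(1) A] by (simp add: mult_le_cancel_left1)
  then show ?thesis by (rule AE_in_set_if_set_integral_density_eq_one[OF f A])
qed

end

locale voter_type = signal_model +
  fixes x :: real
  assumes mlr: "strict_mono (\<lambda>s. f1 s / f0 s)"
    and cutoff_exists: "\<exists>s. f1 s / f0 s = x / (1 - x)"
    and x_less_one: "x < 1" and x_ne_half: "x \<noteq> 1 / 2"
begin

abbreviation "cutoff \<equiv> sstar f0 f1 x"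

lemma cutoff_ratio: "f1 cutoff / f0 cutoff = x / (1 - x)"
  unfolding sstar_def
proof (rule theI')
  show "\<exists>!s. f1 s / f0 s = x / (1 - x)"
    using cutoff_exists strict_mono_eq[OF mlr] by metis
qed

lemma below_cutoff_iff: "0 < x * f0 s - (1 - x) * f1 s \<longleftrightarrow> s < cutoff"
proof -
  have "s < cutoff \<longleftrightarrow> f1 s / f0 s < x / (1 - x)"
    using strict_mono_less[OF mlr, of s cutoff] cutoff_ratio by simp
  also have "\<dots> \<longleftrightarrow> 0 < x * f0 s - (1 - x) * f1 s"
    using pos0[of s] x_less_one by (simp add: divide_less_eq field_simps)
  finally show ?thesis ..
qed

lemma above_cutoff_iff: "x * f0 s - (1 - x) * f1 s < 0 \<longleftrightarrow> cutoff < s"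
proof -
  have "cutoff < s \<longleftrightarrow> x / (1 - x) < f1 s / f0 s"
    using strict_mono_less[OF mlr, of cutoff s] cutoff_ratio by simp
  also have "\<dots> \<longleftrightarrow> x * f0 s - (1 - x) * f1 s < 0"
    using pos0[of s] x_less_one by (simp add: less_divide_eq field_simps)
  finally show ?thesis ..
qed

lemma kappa'_eq: "kappa' f0 f1 x s = (x * f0 s - (1 - x) * f1 s) / (1 - 2 * x)"
proof -
  have "(kappa f0 f1 x has_real_derivative (x * f0 s - (1 - x) * f1 s) / (1 - 2 * x)) (at s)"
    unfolding kappa_def[abs_def]
    by (intro DERIV_cdivide DERIV_diff DERIV_cmult cdf_of_has_real_derivative cont0 cont1 int0 int1)
  then show ?thesis unfolding kappa'_def by (rule DERIV_imp_deriv)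
qed

lemma kappa'_cutoff: "kappa' f0 f1 x cutoff = 0"
  using below_cutoff_iff[of cutoff] above_cutoff_iff[of cutoff] by (simp add: kappa'_eq)

lemma kappa'_measurable [measurable]: "kappa' f0 f1 x \<in> borel_measurable borel"
  unfolding kappa'_eq[abs_def] by measurable

lemma integrable_kappa': "integrable lborel (kappa' f0 f1 x)"
  unfolding kappa'_eq[abs_def] using int0 int1 by simp

lemma integral_kappa': "integral\<^sup>L lborel (kappa' f0 f1 x) = -1"
  unfolding kappa'_eq[abs_def] using int0 int1 tot0 tot1 x_ne_half
  by (simp add: Bochner_Integration.integral_diff field_simps)

lemma kappa_cutoff_eq: "kappa f0 f1 x cutoff = (LINT s:{..<cutoff}|lborel. kappa' f0 f1 x s)"
proof -
  have "set_integrable lborel {..cutoff} f0" "set_integrable lborel {..cutoff} f1"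
    using int0 int1 by (auto intro: set_integrable_of_integrable)
  then have "kappa f0 f1 x cutoff = (LINT s:{..cutoff}|lborel. kappa' f0 f1 x s)"
    unfolding kappa_def cdf_of_def kappa'_eq by (simp add: set_integral_diff)
  also have "\<dots> = (LINT s:{..<cutoff}|lborel. kappa' f0 f1 x s)"
    using AE_lborel_singleton[of cutoff]
    by (intro set_integral_cong_set) (auto simp: set_borel_measurable_def)
  finally show ?thesis .
qed

lemma set_integral_kappa'_ge_cutoff:
  "(LINT s:{cutoff..}|lborel. kappa' f0 f1 x s) = -1 - kappa f0 f1 x cutoff"
proof -
  have "(LINT s:{..<cutoff} \<union> {cutoff..}|lborel. kappa' f0 f1 x s) =
      kappa f0 f1 x cutoff + (LINT s:{cutoff..}|lborel. kappa' f0 f1 x s)"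
    unfolding kappa_cutoff_eq
    by (intro set_integral_Un) (auto intro: set_integrable_of_integrable integrable_kappa')
  moreover have "{..<cutoff} \<union> {cutoff..} = UNIV" by auto
  ultimately show ?thesis
    using set_integral_space[OF integrable_kappa'] integral_kappa' by simp
qed

lemma posterior_ge_iff_kappa':
  assumes "0 \<le> \<alpha>" "\<alpha> < 1" "0 \<le> g s"
  shows "x \<le> posterior f0 f1 \<alpha> g s \<longleftrightarrow>
    (1 - 2 * x) * ((1 - \<alpha>) * kappa' f0 f1 x s) \<le> (1 - 2 * x) * (\<alpha> * g s)"
  using posterior_ge_iff[of f0 s f1 \<alpha> g x] pos0[of s] pos1[of s] assms x_ne_half
  by (simp add: kappa'_eq)

lemma posterior_eq_if_kappa':
  assumes "0 \<le> \<alpha>" "\<alpha> < 1" "0 \<le> g s" "\<alpha> * g s = (1 - \<alpha>) * kappa' f0 f1 x s"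
  shows "posterior f0 f1 \<alpha> g s = x"
  using posterior_eq_iff[of f0 s f1 \<alpha> g x] pos0[of s] pos1[of s] assms x_ne_half
  by (simp add: kappa'_eq)

definition "alpha_lo = kappa f0 f1 x cutoff / (kappa f0 f1 x cutoff + 1)"
definition "g_lo = (\<lambda>s. if s < cutoff then (1 - alpha_lo) / alpha_lo * kappa' f0 f1 x s else 0)"

context
  assumes x_less_half: "x < 1 / 2"
begin

lemma kappa'_pos_below_cutoff: "s < cutoff \<Longrightarrow> 0 < kappa' f0 f1 x s"
  using below_cutoff_iff[of s] x_less_half by (simp add: kappa'_eq)

lemma kappa'_neg_above_cutoff: "cutoff < s \<Longrightarrow> kappa' f0 f1 x s < 0"
  using above_cutoff_iff[of s] x_less_half by (simp add: kappa'_eq divide_less_0_iff)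

lemma kappa_cutoff_pos: "0 < kappa f0 f1 x cutoff"
  unfolding kappa_cutoff_eq
  by (intro set_integral_pos integrable_kappa'
      interval_not_null_sets_lborel[of "cutoff - 1" cutoff])
    (auto intro: kappa'_pos_below_cutoff)

lemma alpha_lo_bounds: "0 < alpha_lo" "alpha_lo < 1"
  using kappa_cutoff_pos unfolding alpha_lo_def by auto

lemma g_lo_eq: "g_lo s = indicator {..<cutoff} s * (kappa' f0 f1 x s / kappa f0 f1 x cutoff)"
  using kappa_cutoff_pos unfolding g_lo_def alpha_lo_def by (simp add: field_simps)

lemma g_lo_nonneg: "0 \<le> g_lo s"
  unfolding g_lo_eq using kappa'_pos_below_cutoff[of s] kappa_cutoff_pos
  by (simp add: indicator_def less_imp_le)

lemma is_density_g_lo: "is_density g_lo"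
proof -
  have int: "set_integrable lborel {..<cutoff} (\<lambda>s. kappa' f0 f1 x s / kappa f0 f1 x cutoff)"
    by (intro set_integrable_of_integrable) (auto intro: integrable_kappa')
  have "integral\<^sup>L lborel g_lo =
      (LINT s:{..<cutoff}|lborel. kappa' f0 f1 x s / kappa f0 f1 x cutoff)"
    unfolding g_lo_eq set_lebesgue_integral_def by simp
  also have "\<dots> = 1" using kappa_cutoff_pos by (simp add: kappa_cutoff_eq)
  finally show ?thesis
    using int g_lo_nonneg unfolding is_density_def g_lo_eq[abs_def] set_integrable_def by simp
qed

lemma posterior_g_lo: "s \<le> cutoff \<Longrightarrow> posterior f0 f1 alpha_lo g_lo s = x"
  using alpha_lo_bounds g_lo_nonneg kappa'_cutoff
  by (intro posterior_eq_if_kappa') (auto simp: g_lo_def)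

lemma approving_signals_g_lo: "approving_signals f0 f1 x alpha_lo g_lo = UNIV"
proof -
  have "x \<le> posterior f0 f1 alpha_lo g_lo s" if "cutoff < s" for s
  proof -
    have "(1 - alpha_lo) * kappa' f0 f1 x s \<le> 0"
      using alpha_lo_bounds kappa'_neg_above_cutoff[OF that] by (simp add: mult_nonneg_nonpos)
    then show ?thesis
      using that alpha_lo_bounds x_less_half
      by (subst posterior_ge_iff_kappa') (auto simp: g_lo_def mult_nonneg_nonpos)
  qed
  then show ?thesis
    using posterior_g_lo by (force simp: approving_signals_def not_less)
qed

lemma vote_prob_g_lo: "is_density f \<Longrightarrow> vote_prob f0 f1 f x alpha_lo g_lo = 1"
  using vote_prob_split[OF _ is_density_g_lo] is_density_g_lo
  by (simp add: approving_signals_g_lo set_lebesgue_integral_def is_density_def)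

lemma alpha_lo_least:
  assumes adm: "admissible \<alpha> g" and le: "\<alpha> \<le> alpha_lo" and one: "vote_prob f0 f1 f0 x \<alpha> g = 1"
  shows "\<alpha> = alpha_lo \<and> (AE s in lborel. g s = g_lo s)"
proof -
  have g: "is_density g" and \<alpha>: "0 \<le> \<alpha>" "\<alpha> < 1"
    using adm le alpha_lo_bounds by (auto simp: admissible_def)
  have "AE s in lborel. s \<in> approving_signals f0 f1 x \<alpha> g"
    using AE_approving_if_vote_prob_eq_one[OF is_density_f0 pos0 adm \<alpha>(2) one] .
  then have persuaded: "AE s in lborel. (1 - \<alpha>) * kappa' f0 f1 x s \<le> \<alpha> * g s"
    by eventually_elim
      (use \<alpha> g x_less_half in
        \<open>auto simp: approving_signals_def posterior_ge_iff_kappa' is_density_def\<close>)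
  have int_g: "set_integrable lborel {..<cutoff} g"
    and int_k: "set_integrable lborel {..<cutoff} (kappa' f0 f1 x)"
    using g integrable_kappa' by (auto intro: set_integrable_of_integrable simp: is_density_def)
  have "(1 - \<alpha>) * kappa f0 f1 x cutoff = (LINT s:{..<cutoff}|lborel. (1 - \<alpha>) * kappa' f0 f1 x s)"
    by (simp add: kappa_cutoff_eq)
  also have "\<dots> \<le> (LINT s:{..<cutoff}|lborel. \<alpha> * g s)"
    using persuaded int_g int_k by (intro set_integral_mono_AE) (auto elim: AE_mp)
  also have "\<dots> \<le> \<alpha>"
    using \<alpha> set_integral_density_le_one[OF g, of "{..<cutoff}"] by (simp add: mult_left_le)
  finally have "alpha_lo \<le> \<alpha>"
    using kappa_cutoff_pos unfolding alpha_lo_def by (simp add: divide_le_eq algebra_simps)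
  with le have \<alpha>_eq: "\<alpha> = alpha_lo" by simp
  have "AE s in lborel. g_lo s \<le> g s"
    using persuaded
  proof eventually_elim
    case (elim s)
    then show ?case
      using alpha_lo_bounds g unfolding \<alpha>_eq g_lo_def is_density_def
      by (auto simp: pos_divide_le_eq mult.commute)
  qed
  then have "AE s in lborel. g_lo s = g s"
    using is_density_g_lo g
    by (intro integral_eq_mono_AE_eq_AE_lborel) (auto simp: is_density_def)
  with \<alpha>_eq show ?thesis by (auto elim: AE_mp)
qed

lemma optimal_choice_lo:
  "optimal_choice f0 f1 x \<alpha> g \<longleftrightarrow> is_density g \<and> \<alpha> = alpha_lo \<and> (AE s in lborel. g s = g_lo s)"
proof (rule optimal_choice_iff_best)
  show "admissible alpha_lo g_lo"
    using alpha_lo_bounds is_density_g_lo by (simp add: admissible_def)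
  show "vote_prob f0 f1 f x \<alpha>' g' \<le> vote_prob f0 f1 f x alpha_lo g_lo"
    if "admissible \<alpha>' g'" "f \<in> {f0, f1}" for \<alpha>' g' f
    using that vote_prob_le_one vote_prob_g_lo is_density_f0 is_density_f1 by auto
  show "\<alpha>' = alpha_lo \<and> (AE s in lborel. g' s = g_lo s)"
    if "admissible \<alpha>' g'" "\<alpha>' \<le> alpha_lo"
      "vote_prob f0 f1 f0 x \<alpha>' g' = vote_prob f0 f1 f0 x alpha_lo g_lo" for \<alpha>' g'
    using that alpha_lo_least vote_prob_g_lo[OF is_density_f0] by simp
  show "vote_prob f0 f1 f x alpha_lo g' = vote_prob f0 f1 f x alpha_lo g_lo"
    if "is_density g'" "AE s in lborel. g' s = g_lo s" "f \<in> {f0, f1}" for g' f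
    using that is_density_f0 is_density_f1 is_density_g_lo by (auto intro: vote_prob_cong_AE)
qed

end

definition "alpha_hi = (kappa f0 f1 x cutoff + 1) / kappa f0 f1 x cutoff"
definition "g_hi = (\<lambda>s. if s < cutoff then 0 else (1 - alpha_hi) / alpha_hi * kappa' f0 f1 x s)"

context
  assumes x_greater_half: "1 / 2 < x"
begin

lemma kappa'_neg_below_cutoff: "s < cutoff \<Longrightarrow> kappa' f0 f1 x s < 0"
  using below_cutoff_iff[of s] x_greater_half by (simp add: kappa'_eq divide_less_0_iff)

lemma kappa'_pos_above_cutoff: "cutoff < s \<Longrightarrow> 0 < kappa' f0 f1 x s"
  using above_cutoff_iff[of s] x_greater_half by (simp add: kappa'_eq zero_less_divide_iff)

lemma kappa'_nonneg_from_cutoff: "cutoff \<le> s \<Longrightarrow> 0 \<le> kappa' f0 f1 x s"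
  using kappa'_pos_above_cutoff[of s] kappa'_cutoff by (cases "s = cutoff") auto

lemma kappa_cutoff_less_minus_one: "kappa f0 f1 x cutoff + 1 < 0"
proof -
  have "AE s\<in>{cutoff..} in lborel. 0 < kappa' f0 f1 x s"
    using AE_lborel_singleton[of cutoff] by eventually_elim (auto intro: kappa'_pos_above_cutoff)
  then have "0 < (LINT s:{cutoff..}|lborel. kappa' f0 f1 x s)"
    by (intro set_integral_pos integrable_kappa'
        interval_not_null_sets_lborel[of cutoff "cutoff + 1"])
      auto
  then show ?thesis by (simp add: set_integral_kappa'_ge_cutoff)
qed

lemma alpha_hi_bounds: "0 < alpha_hi" "alpha_hi < 1"
  using kappa_cutoff_less_minus_one unfolding alpha_hi_def
  by (auto simp: divide_less_eq zero_less_divide_iff)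

lemma alpha_hi_mult_eq:
  "alpha_hi * (1 + (-1 - kappa f0 f1 x cutoff)) = -1 - kappa f0 f1 x cutoff"
  using kappa_cutoff_less_minus_one unfolding alpha_hi_def by (simp add: field_simps)

lemma g_hi_eq:
  "g_hi s = indicator {cutoff..} s * (kappa' f0 f1 x s / (-1 - kappa f0 f1 x cutoff))"
  using kappa_cutoff_less_minus_one unfolding g_hi_def alpha_hi_def by (simp add: field_simps)

lemma g_hi_nonneg: "0 \<le> g_hi s"
  unfolding g_hi_eq using kappa'_nonneg_from_cutoff[of s] kappa_cutoff_less_minus_one
  by (simp add: indicator_def)

lemma is_density_g_hi: "is_density g_hi"
proof -
  have int: "set_integrable lborel {cutoff..} (\<lambda>s. kappa' f0 f1 x s / (-1 - kappa f0 f1 x cutoff))"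
    by (intro set_integrable_of_integrable) (auto intro: integrable_kappa')
  have "integral\<^sup>L lborel g_hi =
      (LINT s:{cutoff..}|lborel. kappa' f0 f1 x s / (-1 - kappa f0 f1 x cutoff))"
    unfolding g_hi_eq set_lebesgue_integral_def by simp
  also have "\<dots> = 1" using kappa_cutoff_less_minus_one by (simp add: set_integral_kappa'_ge_cutoff)
  finally show ?thesis
    using int g_hi_nonneg unfolding is_density_def g_hi_eq[abs_def] set_integrable_def by simp
qed

lemma posterior_g_hi: "cutoff \<le> s \<Longrightarrow> posterior f0 f1 alpha_hi g_hi s = x"
  using alpha_hi_bounds by (intro posterior_eq_if_kappa' g_hi_nonneg) (auto simp: g_hi_def)

lemma approving_signals_hi:
  assumes "0 \<le> \<alpha>" "\<alpha> < 1" "0 \<le> g s" "s \<in> approving_signals f0 f1 x \<alpha> g"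
  shows "cutoff \<le> s" "\<alpha> * g s \<le> (1 - \<alpha>) * kappa' f0 f1 x s"
proof -
  show le: "\<alpha> * g s \<le> (1 - \<alpha>) * kappa' f0 f1 x s"
    using assms x_greater_half
    by (auto simp: approving_signals_def posterior_ge_iff_kappa' mult_le_cancel_left)
  show "cutoff \<le> s"
  proof (rule ccontr)
    assume "\<not> cutoff \<le> s"
    then have "(1 - \<alpha>) * kappa' f0 f1 x s < 0"
      using assms(2) kappa'_neg_below_cutoff by (simp add: mult_pos_neg)
    with le assms(1,3) show False by (smt (verit) mult_nonneg_nonneg)
  qed
qed

lemma approving_signals_g_hi: "approving_signals f0 f1 x alpha_hi g_hi = {cutoff..}"
  using approving_signals_hi(1)[of alpha_hi g_hi] alpha_hi_bounds g_hi_nonneg posterior_g_hi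
  by (force simp: approving_signals_def)

lemma vote_prob_g_hi:
  assumes "is_density f"
  shows "vote_prob f0 f1 f x alpha_hi g_hi =
    (1 - alpha_hi) * (LINT s:{cutoff..}|lborel. f s) + alpha_hi"
proof -
  have "(LINT s:{cutoff..}|lborel. g_hi s) = integral\<^sup>L lborel g_hi"
    unfolding set_lebesgue_integral_def
    by (intro Bochner_Integration.integral_cong) (auto simp: g_hi_def)
  then show ?thesis
    using vote_prob_split[OF assms is_density_g_hi] is_density_g_hi x_greater_half
    by (simp add: approving_signals_g_hi is_density_def)
qed

lemma set_integral_from_cutoff_less_one:
  assumes f: "is_density f" "\<And>s. 0 < f s"
  shows "(LINT s:{cutoff..}|lborel. f s) < 1"
proof -
  have "{..<cutoff} \<notin> null_sets lborel"
    by (intro interval_not_null_sets_lborel[of "cutoff - 1" cutoff]) auto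
  then have "\<not> (AE s in lborel. s \<in> {cutoff..})"
    using AE_iff_null_sets[of "{..<cutoff}" lborel] by (simp add: not_less)
  then show ?thesis
    using AE_in_set_if_set_integral_density_eq_one[OF f, of "{cutoff..}"]
      set_integral_density_le_one[OF f(1), of "{cutoff..}"] by fastforce
qed

lemma approving_signals_all_trolls: "approving_signals f0 f1 x 1 g = {}"
proof -
  have "posterior f0 f1 1 g s < x" for s
    using posterior_all_trolls_le_half[of f0 f1 g s] x_greater_half by simp
  then show ?thesis by (simp add: approving_signals_def not_le)
qed

lemma approving_masses_hi:
  assumes f: "is_density f" and adm: "admissible \<alpha> g" "\<alpha> < 1"
  defines "A \<equiv> approving_signals f0 f1 x \<alpha> g"
  shows "(LINT s:A|lborel. f s) \<le> (LINT s:{cutoff..}|lborel. f s)"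
    and "\<alpha> * (LINT s:A|lborel. g s) \<le> (1 - \<alpha>) * (-1 - kappa f0 f1 x cutoff)"
proof -
  have g: "is_density g" and \<alpha>: "0 \<le> \<alpha>" using adm by (auto simp: admissible_def)
  from g have A: "A \<in> sets borel" unfolding A_def by (rule approving_signals_sets)
  have approving: "cutoff \<le> s" "\<alpha> * g s \<le> (1 - \<alpha>) * kappa' f0 f1 x s" if "s \<in> A" for s
    using approving_signals_hi[of \<alpha> g s] \<alpha> adm(2) g that by (auto simp: A_def is_density_def)
  show "(LINT s:A|lborel. f s) \<le> (LINT s:{cutoff..}|lborel. f s)"
    using f A approving(1) by (intro set_integral_mono_set) (auto simp: is_density_def)
  have "\<alpha> * (LINT s:A|lborel. g s) = (LINT s:A|lborel. \<alpha> * g s)" by simp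
  also have "\<dots> \<le> (LINT s:A|lborel. (1 - \<alpha>) * kappa' f0 f1 x s)"
    using g A approving(2) integrable_kappa'
    by (intro set_integral_mono set_integrable_of_integrable) (auto simp: is_density_def)
  also have "\<dots> \<le> (1 - \<alpha>) * (LINT s:{cutoff..}|lborel. kappa' f0 f1 x s)"
    using adm(2) A approving(1) integrable_kappa' kappa'_nonneg_from_cutoff
    by (simp, intro mult_left_mono set_integral_mono_set) auto
  finally show "\<alpha> * (LINT s:A|lborel. g s) \<le> (1 - \<alpha>) * (-1 - kappa f0 f1 x cutoff)"
    by (simp add: set_integral_kappa'_ge_cutoff)
qed

lemma vote_prob_le_hi:
  assumes f: "is_density f" "\<And>s. 0 < f s" and adm: "admissible \<alpha> g"
  defines "A \<equiv> approving_signals f0 f1 x \<alpha> g"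
  shows "vote_prob f0 f1 f x \<alpha> g \<le> vote_prob f0 f1 f x alpha_hi g_hi"
    and "vote_prob f0 f1 f x \<alpha> g = vote_prob f0 f1 f x alpha_hi g_hi \<Longrightarrow>
      \<alpha> = alpha_hi \<and> (LINT s:A|lborel. g s) = 1"
proof -
  let ?P = "LINT s:{cutoff..}|lborel. f s"
  have g: "is_density g" and \<alpha>: "0 \<le> \<alpha>" "\<alpha> \<le> 1"
    using adm by (auto simp: admissible_def)
  from g have A: "A \<in> sets borel" unfolding A_def by (rule approving_signals_sets)
  have P: "0 \<le> ?P" "?P < 1"
    using set_integral_density_nonneg[OF f(1)] set_integral_from_cutoff_less_one[OF f] by auto
  have split: "vote_prob f0 f1 f x \<alpha> g =
      (1 - \<alpha>) * (LINT s:A|lborel. f s) + \<alpha> * (LINT s:A|lborel. g s)"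
    unfolding A_def by (rule vote_prob_split[OF f(1) g])
  have "vote_prob f0 f1 f x \<alpha> g \<le> (1 - alpha_hi) * ?P + alpha_hi \<and>
    (vote_prob f0 f1 f x \<alpha> g = (1 - alpha_hi) * ?P + alpha_hi \<longrightarrow>
      \<alpha> = alpha_hi \<and> (LINT s:A|lborel. g s) = 1)"
  proof (cases "\<alpha> = 1")
    case True
    then have "vote_prob f0 f1 f x \<alpha> g = 0"
      using split approving_signals_all_trolls by (simp add: A_def set_lebesgue_integral_def)
    moreover have "0 < (1 - alpha_hi) * ?P + alpha_hi"
      using P alpha_hi_bounds by (intro add_nonneg_pos) auto
    ultimately show ?thesis by simp
  next
    case False
    with \<alpha> have "\<alpha> < 1" by simp
    from approving_masses_hi[OF f(1) adm this] show ?thesis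
      using trade_off_bound[OF P _ alpha_hi_mult_eq \<alpha>] set_integral_density_le_one[OF g A]
        split kappa_cutoff_less_minus_one unfolding A_def by simp
  qed
  with vote_prob_g_hi[OF f(1)]
  show "vote_prob f0 f1 f x \<alpha> g \<le> vote_prob f0 f1 f x alpha_hi g_hi"
    and "vote_prob f0 f1 f x \<alpha> g = vote_prob f0 f1 f x alpha_hi g_hi \<Longrightarrow>
      \<alpha> = alpha_hi \<and> (LINT s:A|lborel. g s) = 1"
    by auto
qed

lemma g_hi_unique:
  assumes g: "is_density g"
    and one: "(LINT s:approving_signals f0 f1 x alpha_hi g|lborel. g s) = 1"
  shows "AE s in lborel. g s = g_hi s"
proof -
  let ?A = "approving_signals f0 f1 x alpha_hi g"
  have A: "?A \<in> sets borel" using g by (rule approving_signals_sets)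
  have int: "integrable lborel g" "integrable lborel g_hi"
    "integrable lborel (\<lambda>s. indicator ?A s * g s)"
    using g is_density_g_hi A integrable_mult_indicator[of ?A lborel g] by (auto simp: is_density_def)
  have ints: "integral\<^sup>L lborel (\<lambda>s. indicator ?A s * g s) = 1"
    "integral\<^sup>L lborel g = 1" "integral\<^sup>L lborel g_hi = 1"
    using one g is_density_g_hi by (simp_all add: set_lebesgue_integral_def is_density_def)
  have "indicator ?A s * g s \<le> g_hi s" for s
  proof (cases "s \<in> ?A")
    case True
    with approving_signals_hi[of alpha_hi g s] alpha_hi_bounds g
    have "cutoff \<le> s" "alpha_hi * g s \<le> (1 - alpha_hi) * kappa' f0 f1 x s"
      by (auto simp: is_density_def)
    with True alpha_hi_bounds show ?thesis by (simp add: g_hi_def pos_le_divide_eq mult.commute)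
  qed (simp add: g_hi_nonneg)
  then have "AE s in lborel. indicator ?A s * g s = g_hi s"
    using int ints by (intro integral_eq_mono_AE_eq_AE_lborel) auto
  moreover have "AE s in lborel. indicator ?A s * g s = g s"
    using int ints g
    by (intro integral_eq_mono_AE_eq_AE_lborel)
      (auto simp: is_density_def indicator_def)
  ultimately show ?thesis by eventually_elim simp
qed

lemma optimal_choice_hi:
  "optimal_choice f0 f1 x \<alpha> g \<longleftrightarrow> is_density g \<and> \<alpha> = alpha_hi \<and> (AE s in lborel. g s = g_hi s)"
proof (rule optimal_choice_iff_best)
  show "admissible alpha_hi g_hi"
    using alpha_hi_bounds is_density_g_hi by (simp add: admissible_def)
  show "vote_prob f0 f1 f x \<alpha>' g' \<le> vote_prob f0 f1 f x alpha_hi g_hi"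
    if "admissible \<alpha>' g'" "f \<in> {f0, f1}" for \<alpha>' g' f
    using that vote_prob_le_hi(1) is_density_f0 is_density_f1 pos0 pos1 by blast
  show "\<alpha>' = alpha_hi \<and> (AE s in lborel. g' s = g_hi s)"
    if "admissible \<alpha>' g'"
      "vote_prob f0 f1 f1 x \<alpha>' g' = vote_prob f0 f1 f1 x alpha_hi g_hi" for \<alpha>' g'
    using vote_prob_le_hi(2)[OF is_density_f1 pos1 that] g_hi_unique that(1)
    by (auto simp: admissible_def)
  show "vote_prob f0 f1 f x alpha_hi g' = vote_prob f0 f1 f x alpha_hi g_hi"
    if "is_density g'" "AE s in lborel. g' s = g_hi s" "f \<in> {f0, f1}" for g' f
    using that is_density_f0 is_density_f1 is_density_g_hi by (auto intro: vote_prob_cong_AE)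
qed

end

end

theorem proposition1:
  fixes f0 f1 :: "real \<Rightarrow> real" and x :: real
  assumes cont0: "continuous_on UNIV f0" and cont1: "continuous_on UNIV f1"
    and pos0: "\<And>s. f0 s > 0" and pos1: "\<And>s. f1 s > 0"
    and int0: "integrable lborel f0" and int1: "integrable lborel f1"
    and tot0: "integral\<^sup>L lborel f0 = 1" and tot1: "integral\<^sup>L lborel f1 = 1"
    and eq0: "f0 0 = f1 0"
    and mlr: "strict_mono (\<lambda>s. f1 s / f0 s)"
    and sstar_ex: "\<exists>s. f1 s / f0 s = x / (1 - x)"
    and x: "x \<in> {0<..<1/2} \<union> {1/2<..<1}"
  shows
   "(x < 1/2 \<longrightarrow>
      (let s' = sstar f0 f1 x; k = kappa f0 f1 x s'; a = k / (k + 1);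
           g = (\<lambda>s. if s < s' then (1 - a) / a * kappa' f0 f1 x s else 0) in
        (\<forall>\<alpha> ft. optimal_choice f0 f1 x \<alpha> ft \<longleftrightarrow>
           (is_density ft \<and> \<alpha> = a \<and> (AE s in lborel. ft s = g s))) \<and>
        (\<forall>s\<le>s'. posterior f0 f1 a g s = x)))
    \<and>
    (x > 1/2 \<longrightarrow>
      (let s' = sstar f0 f1 x; k = kappa f0 f1 x s'; a = (k + 1) / k;
           g = (\<lambda>s. if s < s' then 0 else (1 - a) / a * kappa' f0 f1 x s) in
        (\<forall>\<alpha> ft. optimal_choice f0 f1 x \<alpha> ft \<longleftrightarrow>
           (is_density ft \<and> \<alpha> = a \<and> (AE s in lborel. ft s = g s))) \<and>
        (\<forall>s\<ge>s'. posterior f0 f1 a g s = x)))"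
proof -
  interpret voter_type f0 f1 x
    using assms by unfold_locales auto
  show ?thesis
    using optimal_choice_lo posterior_g_lo optimal_choice_hi posterior_g_hi
    unfolding Let_def alpha_lo_def g_lo_def alpha_hi_def g_hi_def by auto
qed

end
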